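(* Let $[a,b]$ be a bounded interval, $n\ge2$ an integer, $h=(b-a)/n$, $x_k=a+kh$ ($0\le k\le n$), and let $X_n$ be the real vector space of maps $f:\{x_0,\ldots,x_n\}\to\mathbb R$. Let $s\ge0$, $\delta>0$, $0<c<1$, $M_0>0$, $C\ge0$, and let $N$ be a positive integer or $N=\infty$. For $1\le j\le N$ let $\theta_j:[a,b]\to[a,b]$ be Lipschitz with $\mathrm{Lip}(\theta_j)\le c$, let $\beta_j\in K_{M_0}\setminus\{0\}$, and let $C_j\in\mathbb R$ with $|C_j|\le C$. Define $\hat\beta_{j,s}\in X_n$ by $\hat\beta_{j,s}(x_k)=[1+\tfrac12C_jQ(\theta_j(x_k))][\beta_j(x_k)]^s$ and $L_{j,s}:X_n\to X_n$ by $(L_{j,s}f)(x_k)=\hat\beta_{j,s}(x_k)f^I(\theta_j(x_k))$. If $N=\infty$, assume there exists $k_0$ with $0\le k_0\le n$ such that $\sum_{j=1}^\infty\hat\beta_{j,s}(x_{k_0})<\infty$. Let $L_s=\sum_{j=1}^NL_{j,s}$. Assume $h\le1$, $Ch/4\le1$, and with $M_2=[sM_0+(1+h)/2]+\delta$ assume $\exp(-M_2h)\ge(1+c)/2$; let $M\in\mathbb R$ satisfy $\exp(Mh)\ge2$. Then $L_s(K_M\setminus\{0\})\subset K_{M-\delta}\setminus\{0\}$.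
   Context: For $f\in X_n$, $f^I:[a,b]\to\mathbb R$ is its piecewise linear interpolant: $f^I(x)=\frac{x-x_j}{h}f(x_{j+1})+\frac{x_{j+1}-x}{h}f(x_j)$ for $x_j\le x\le x_{j+1}$. For $M>0$, $K_M=\{f\in X_n: f(x_{j+1})\le f(x_j)e^{Mh}\text{ and }f(x_j)\le f(x_{j+1})e^{Mh},\ 0\le j<n\}$. $Q:[a,b]\to[0,h^2/4]$ is $Q(u)=(x_{j+1}-u)(u-x_j)$ for $x_j\le u\le x_{j+1}$. *)

theory Defs
  imports "HOL-Analysis.Analysis" "HOL-Library.Extended_Nat"
begin

text \<open>Elements of X_n are represented by functions nat => real, where f k stands
  for f(x_k); only the values at k = 0..n matter.\<close>

definition step :: "real \<Rightarrow> real \<Rightarrow> nat \<Rightarrow> real" where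
  "step a b n = (b - a) / real n"

definition grid :: "real \<Rightarrow> real \<Rightarrow> nat \<Rightarrow> nat \<Rightarrow> real" where
  "grid a b n k = a + real k * step a b n"

definition cell :: "real \<Rightarrow> real \<Rightarrow> nat \<Rightarrow> real \<Rightarrow> nat" where
  "cell a b n u = min (nat \<lfloor>(u - a) / step a b n\<rfloor>) (n - 1)"

definition interp :: "real \<Rightarrow> real \<Rightarrow> nat \<Rightarrow> (nat \<Rightarrow> real) \<Rightarrow> real \<Rightarrow> real" where
  "interp a b n f x =
    (let j = cell a b n x; h = step a b n in
      (x - grid a b n j) / h * f (Suc j) + (grid a b n (Suc j) - x) / h * f j)"

definition Qfun :: "real \<Rightarrow> real \<Rightarrow> nat \<Rightarrow> real \<Rightarrow> real" where
  "Qfun a b n u = (let j = cell a b n u in (grid a b n (Suc j) - u) * (u - grid a b n j))"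

definition Kcone :: "real \<Rightarrow> real \<Rightarrow> nat \<Rightarrow> real \<Rightarrow> (nat \<Rightarrow> real) set" where
  "Kcone a b n M = {f. \<forall>j<n. f (Suc j) \<le> f j * exp (M * step a b n)
                          \<and> f j \<le> f (Suc j) * exp (M * step a b n)}"

definition nonzero_grid :: "nat \<Rightarrow> (nat \<Rightarrow> real) \<Rightarrow> bool" where
  "nonzero_grid n f \<longleftrightarrow> (\<exists>k\<le>n. f k \<noteq> 0)"

definition idx :: "enat \<Rightarrow> nat set" where
  "idx N = {j. 1 \<le> j \<and> enat j \<le> N}"

definition betahat :: "real \<Rightarrow> real \<Rightarrow> nat \<Rightarrow> real \<Rightarrow> (nat \<Rightarrow> real \<Rightarrow> real)
      \<Rightarrow> (nat \<Rightarrow> real) \<Rightarrow> (nat \<Rightarrow> nat \<Rightarrow> real) \<Rightarrow> nat \<Rightarrow> nat \<Rightarrow> real" where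
  "betahat a b n s \<theta> Cc \<beta> j k =
     (1 + Cc j * Qfun a b n (\<theta> j (grid a b n k)) / 2) * (\<beta> j k) powr s"

definition Lop :: "real \<Rightarrow> real \<Rightarrow> nat \<Rightarrow> real \<Rightarrow> enat \<Rightarrow> (nat \<Rightarrow> real \<Rightarrow> real)
      \<Rightarrow> (nat \<Rightarrow> real) \<Rightarrow> (nat \<Rightarrow> nat \<Rightarrow> real) \<Rightarrow> (nat \<Rightarrow> real) \<Rightarrow> nat \<Rightarrow> real" where
  "Lop a b n s N \<theta> Cc \<beta> f k =
     (\<Sum>\<^sub>\<infinity>j\<in>idx N. betahat a b n s \<theta> Cc \<beta> j k * interp a b n f (\<theta> j (grid a b n k)))"

end

theory Submission
  imports Defs
begin

text \<open>A nonzero f \<in> K_M is positive on the grid, and membership in K_M says that neighbouring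
  values differ by a factor of at most L = exp (M h). Fix adjacent grid points x_k, x_k'. In the
  j-th term of L_s f the weight \<beta>_j^s changes by at most exp (s M_0 h), because \<beta>_j \<in> K_M_0; the
  perturbation factor 1 + C_j Q / 2 changes by at most 1 / (1 - h/2), because \<bar>C_j Q / 2\<bar> \<le> h/2
  and Q \<ge> 0 gives the two values the same sign; and f^I \<circ> \<theta>_j changes by at most L (1 + c) / 2,
  because the two image points are at distance at most c h < h, so they lie in one cell or in two
  adjacent cells, on which the interpolant of f cannot vary more. The choice of M_2 makes the product
  of the first two factors with (1 + c) / 2 at most exp (-\<delta> h), so every term, and hence the
  sum, has neighbour ratio at most exp ((M - \<delta>) h). For N = \<infinity> the same bound on the weights
  carries summability from x_k0 to all grid points.\<close>

lemma step_pos: "a < b \<Longrightarrow> 1 \<le> n \<Longrightarrow> 0 < step a b n"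
  by (simp add: step_def)

lemma grid_Suc: "grid a b n (Suc j) = grid a b n j + step a b n"
  by (simp add: grid_def algebra_simps)

lemma grid_mem_interval:
  assumes "a < b" "1 \<le> n" "k \<le> n"
  shows "grid a b n k \<in> {a..b}"
proof -
  have h: "0 < step a b n" using assms step_pos by blast
  have "real k * step a b n \<le> real n * step a b n" using assms h by (intro mult_right_mono) auto
  also have "\<dots> = b - a" using assms by (simp add: step_def)
  finally show ?thesis using h by (auto simp: grid_def)
qed

lemma cell_coordinate:
  assumes "a < b" "1 \<le> n" "u \<in> {a..b}"
  obtains j t where "j < n" "0 \<le> t" "t \<le> 1" "u = grid a b n j + t * step a b n"
    "interp a b n f u = (1 - t) * f j + t * f (Suc j)"
    "Qfun a b n u = t * (1 - t) * (step a b n)\<^sup>2"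
proof -
  define h where "h = step a b n"
  have h: "0 < h" using assms step_pos h_def by blast
  define r where "r = (u - a) / h"
  define j where "j = cell a b n u"
  define t where "t = (u - grid a b n j) / h"
  have r0: "0 \<le> r" using assms h by (simp add: r_def)
  have j: "j = min (nat \<lfloor>r\<rfloor>) (n - 1)" by (simp add: j_def cell_def r_def h_def)
  have rh: "r * h = u - a" using h by (simp add: r_def)
  have "real j * h \<le> r * h" using j r0 h by (intro mult_right_mono) linarith+
  hence lower: "grid a b n j \<le> u" using rh by (simp add: grid_def h_def)
  have upper: "u \<le> grid a b n j + h"
  proof (cases "nat \<lfloor>r\<rfloor> \<le> n - 1")
    case True
    have "r * h \<le> (real (nat \<lfloor>r\<rfloor>) + 1) * h" using r0 h by (intro mult_right_mono) linarith+
    thus ?thesis using True j rh by (simp add: grid_def h_def algebra_simps)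
  next
    case False
    \<comment> \<open>the clamp in \<open>cell\<close> puts u = b into the last cell\<close>
    hence "Suc j = n" using j assms by simp
    hence "grid a b n j + h = b" using assms grid_Suc[of a b n j]
      by (simp add: grid_def step_def h_def)
    thus ?thesis using assms by simp
  qed
  have u: "u = grid a b n j + t * h" using h by (simp add: t_def)
  show ?thesis
  proof
    show "j < n" using j assms by simp
    show "0 \<le> t" "t \<le> 1" using lower upper h by (simp_all add: t_def field_simps)
    show "u = grid a b n j + t * step a b n" using u h_def by simp
    show "interp a b n f u = (1 - t) * f j + t * f (Suc j)"
      using h by (simp add: interp_def Let_def j_def[symmetric] t_def grid_Suc h_def[symmetric]
          field_simps)
    show "Qfun a b n u = t * (1 - t) * (step a b n)\<^sup>2"
      unfolding Qfun_def Let_def j_def[symmetric] grid_Suc h_def[symmetric]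
      using u h by (simp add: power2_eq_square algebra_simps)
  qed
qed

lemma Qfun_bounds:
  assumes "a < b" "1 \<le> n" "u \<in> {a..b}"
  shows "0 \<le> Qfun a b n u" "Qfun a b n u \<le> (step a b n)\<^sup>2 / 4"
proof -
  obtain t where t: "0 \<le> t" "t \<le> 1" and Q: "Qfun a b n u = t * (1 - t) * (step a b n)\<^sup>2"
    using cell_coordinate[OF assms] by metis
  show "0 \<le> Qfun a b n u" using t Q by simp
  have "t * (1 - t) \<le> 1 / 4" using zero_le_square[of "t - 1/2"] by (simp add: algebra_simps power2_eq_square)
  hence "t * (1 - t) * (step a b n)\<^sup>2 \<le> 1 / 4 * (step a b n)\<^sup>2" by (rule mult_right_mono) simp_all
  thus "Qfun a b n u \<le> (step a b n)\<^sup>2 / 4" using Q by simp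
qed

lemma nonneg_of_mutual_bound:
  fixes x y L :: real
  assumes "x \<le> y * L" "y \<le> x * L" "1 < L"
  shows "0 \<le> x"
proof -
  have "y * L \<le> x * L * L" using assms by (intro mult_right_mono) auto
  hence "0 \<le> x * (L * L - 1)" using assms(1) by (simp add: algebra_simps)
  moreover have "1 < L * L" using assms(3) less_1_mult[of L L] by simp
  ultimately show ?thesis by (simp add: zero_le_mult_iff)
qed

lemma Kcone_adjacent:
  assumes "f \<in> Kcone a b n M" "k \<le> n" "k' \<le> n" "k' = Suc k \<or> k = Suc k'"
  shows "f k' \<le> f k * exp (M * step a b n)"
  using assms by (auto simp: Kcone_def)

lemma Kcone_pos:
  assumes f: "f \<in> Kcone a b n M" "nonzero_grid n f" and n: "1 \<le> n"
    and L: "1 < exp (M * step a b n)" and k: "k \<le> n"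
  shows "0 < f k"
proof -
  have nonneg: "0 \<le> f i" if "i \<le> n" for i
  proof -
    obtain i' where i': "i' \<le> n" "i' = Suc i \<or> i = Suc i'"
    proof (cases "i < n")
      case True
      then show ?thesis using that[of "Suc i"] by simp
    next
      case False
      then show ?thesis using that[of "n - 1"] \<open>i \<le> n\<close> n by simp
    qed
    have "f i \<le> f i' * exp (M * step a b n)" "f i' \<le> f i * exp (M * step a b n)"
      using Kcone_adjacent[OF f(1) i'(1) \<open>i \<le> n\<close>] Kcone_adjacent[OF f(1) \<open>i \<le> n\<close> i'(1)] i'(2)
      by blast+
    then show ?thesis using L by (rule nonneg_of_mutual_bound)
  qed
  have zero_iff: "f i = 0 \<longleftrightarrow> f 0 = 0" if "i \<le> n" for i
    using that
  proof (induction i)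
    case (Suc i)
    have "f (Suc i) \<le> f i * exp (M * step a b n)" "f i \<le> f (Suc i) * exp (M * step a b n)"
      using Kcone_adjacent[OF f(1), of i "Suc i"] Kcone_adjacent[OF f(1), of "Suc i" i] Suc.prems
      by simp_all
    moreover have "0 \<le> f i" "0 \<le> f (Suc i)" using nonneg Suc.prems by simp_all
    ultimately have "f (Suc i) = 0 \<longleftrightarrow> f i = 0" by (metis mult_zero_left order_antisym)
    thus ?case using Suc by simp
  qed simp
  have "f k \<noteq> 0" using f(2) zero_iff[OF k] zero_iff unfolding nonzero_grid_def by blast
  thus ?thesis using nonneg[OF k] by simp
qed

lemma Kcone_powr:
  assumes "f \<in> Kcone a b n M" "\<And>k. k \<le> n \<Longrightarrow> 0 \<le> f k" "0 \<le> s"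
  shows "(\<lambda>k. f k powr s) \<in> Kcone a b n (s * M)"
proof -
  have "f k' powr s \<le> f k powr s * exp (s * M * step a b n)"
    if "k \<le> n" "k' \<le> n" "k' = Suc k \<or> k = Suc k'" for k k'
  proof -
    have "f k' powr s \<le> (f k * exp (M * step a b n)) powr s"
      using assms that Kcone_adjacent[OF assms(1) that] by (intro powr_mono2) auto
    also have "\<dots> = f k powr s * exp (s * M * step a b n)"
      using assms that by (simp add: powr_mult exp_powr_real algebra_simps)
    finally show ?thesis .
  qed
  thus ?thesis unfolding Kcone_def by (auto simp: mult.assoc)
qed

lemma min_le_convex_comb:
  fixes A B t :: real
  assumes "0 \<le> t" "t \<le> 1"
  shows "min A B \<le> (1 - t) * A + t * B"
proof -
  have "(1 - t) * min A B + t * min A B \<le> (1 - t) * A + t * B"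
    using assms by (intro add_mono mult_left_mono) auto
  thus ?thesis by (simp add: algebra_simps)
qed

lemma convex_comb_ratio_same_cell:
  fixes A B L c t t' :: real
  assumes "0 < A" "0 < B" "B \<le> L * A" "A \<le> L * B" "2 \<le> L" "c < 1"
    and "0 \<le> t" "t \<le> 1" "0 \<le> t'" "t' \<le> 1" "\<bar>t - t'\<bar> \<le> c"
  shows "(1 - t) * A + t * B \<le> L * (1 + c) / 2 * ((1 - t') * A + t' * B)"
proof -
  define P where "P = (1 - t') * A + t' * B"
  have "min A B \<le> P" unfolding P_def using assms by (intro min_le_convex_comb)
  moreover have "\<bar>B - A\<bar> \<le> (L - 1) * min A B" using assms by (auto simp: min_def algebra_simps)
  ultimately have "\<bar>B - A\<bar> \<le> (L - 1) * P"
    using assms by (meson diff_ge_0_iff_ge dual_order.trans mult_left_mono one_le_numeral order.trans)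
  have "(t - t') * (B - A) \<le> \<bar>t - t'\<bar> * \<bar>B - A\<bar>" by (metis abs_ge_self abs_mult)
  also have "\<dots> \<le> c * ((L - 1) * P)"
    using assms \<open>\<bar>B - A\<bar> \<le> (L - 1) * P\<close> by (intro mult_mono) auto
  finally have "(t - t') * (B - A) \<le> c * ((L - 1) * P)" .
  moreover have "0 \<le> (1 - c) * (L - 2) * P"
    using assms \<open>min A B \<le> P\<close> by (intro mult_nonneg_nonneg) auto
  ultimately show ?thesis unfolding P_def by (simp add: algebra_simps)
qed

lemma convex_comb_ratio_adjacent_cells:
  fixes A B D L c t t' :: real
  assumes "0 < B" "A \<le> L * B" "B \<le> L * D" "2 \<le> L" "c < 1"
    and "0 \<le> t" "t \<le> 1" "0 \<le> t'" "t' \<le> 1" "(1 - t) + t' \<le> c"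
  shows "(1 - t) * A + t * B \<le> L * (1 + c) / 2 * ((1 - t') * B + t' * D)"
proof -
  define U where "U = 1 + (1 - t) * (L - 1)"
  define V where "V = L - t' * (L - 1)"
  have upper: "(1 - t) * A + t * B \<le> U * B"
    using mult_left_mono[OF assms(2), of "1 - t"] assms by (simp add: U_def algebra_simps)
  have lower: "V * B \<le> L * ((1 - t') * B + t' * D)"
    using mult_left_mono[OF assms(3), of t'] assms by (simp add: V_def algebra_simps)
  have "2 * U \<le> (1 + c) * V"
  proof -
    have "(1 - t) * (L - 1) \<le> (c - t') * (L - 1)" using assms by (intro mult_right_mono) auto
    moreover have "0 \<le> (1 - c) * (L - 2)" "0 \<le> t' * ((L - 1) * (1 - c))" using assms by auto
    ultimately show ?thesis by (simp add: U_def V_def algebra_simps)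
  qed
  hence "2 * U * B \<le> (1 + c) * V * B" using assms(1) by (intro mult_right_mono) auto
  hence "2 * ((1 - t) * A + t * B) \<le> (1 + c) * (V * B)" using upper by (simp add: mult.assoc)
  also have "\<dots> \<le> (1 + c) * (L * ((1 - t') * B + t' * D))"
    using lower assms by (intro mult_left_mono) auto
  finally show ?thesis by (simp add: algebra_simps)
qed

lemma interp_pos:
  assumes "a < b" "1 \<le> n" "\<And>k. k \<le> n \<Longrightarrow> 0 < f k" "u \<in> {a..b}"
  shows "0 < interp a b n f u"
proof -
  obtain j t where "j < n" "0 \<le> t" "t \<le> 1" "interp a b n f u = (1 - t) * f j + t * f (Suc j)"
    using cell_coordinate[OF assms(1,2,4)] by metis
  moreover have "0 < f j" "0 < f (Suc j)" using assms(3) \<open>j < n\<close> by simp_all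
  ultimately show ?thesis using min_le_convex_comb[of t "f j" "f (Suc j)"]
    by (metis min_less_iff_conj order_less_le_trans)
qed

lemma interp_le_sum:
  assumes "a < b" "1 \<le> n" "\<And>k. k \<le> n \<Longrightarrow> 0 \<le> f k" "u \<in> {a..b}"
  shows "interp a b n f u \<le> (\<Sum>k\<le>n. f k)"
proof -
  obtain j t where j: "j < n" "0 \<le> t" "t \<le> 1" and I: "interp a b n f u = (1 - t) * f j + t * f (Suc j)"
    using cell_coordinate[OF assms(1,2,4)] by metis
  have "f j \<le> (\<Sum>k\<le>n. f k)" "f (Suc j) \<le> (\<Sum>k\<le>n. f k)"
    using j assms(3) by (intro member_le_sum; simp)+
  hence "(1 - t) * f j + t * f (Suc j) \<le> (1 - t) * (\<Sum>k\<le>n. f k) + t * (\<Sum>k\<le>n. f k)"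
    using j by (intro add_mono mult_left_mono) auto
  thus ?thesis using I by (simp add: algebra_simps)
qed

lemma interp_ratio:
  assumes ab: "a < b" and n: "1 \<le> n" and f: "f \<in> Kcone a b n M" "\<And>k. k \<le> n \<Longrightarrow> 0 < f k"
    and L: "2 \<le> exp (M * step a b n)" and c: "c < 1"
    and u: "u \<in> {a..b}" and v: "v \<in> {a..b}" and uv: "\<bar>u - v\<bar> \<le> c * step a b n"
  shows "interp a b n f u \<le> exp (M * step a b n) * (1 + c) / 2 * interp a b n f v"
proof -
  define h where "h = step a b n"
  define L where "L = exp (M * h)"
  have h: "0 < h" using ab n step_pos h_def by blast
  obtain j t where j: "j < n" "0 \<le> t" "t \<le> 1" "u = grid a b n j + t * h"
    and Iu: "interp a b n f u = (1 - t) * f j + t * f (Suc j)"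
    using cell_coordinate[OF ab n u] h_def by metis
  obtain i t' where i: "i < n" "0 \<le> t'" "t' \<le> 1" "v = grid a b n i + t' * h"
    and Iv: "interp a b n f v = (1 - t') * f i + t' * f (Suc i)"
    using cell_coordinate[OF ab n v] h_def by metis
  have ratio: "f (Suc m) \<le> L * f m" "f m \<le> L * f (Suc m)" if "m < n" for m
    using f(1) that by (auto simp: Kcone_def L_def h_def mult.commute)
  have pos: "0 < f m" "0 < f (Suc m)" if "m < n" for m
    using f(2) that by simp_all
  have "u - v = (real j - real i + t - t') * h"
    using j(4) i(4) by (simp add: grid_def h_def algebra_simps)
  hence dist: "\<bar>real j - real i + t - t'\<bar> \<le> c"
    using uv h by (simp add: abs_mult h_def[symmetric])
  consider "i = j" | "i = Suc j" | "j = Suc i"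
    using dist c j(2,3) i(2,3) by linarith
  thus ?thesis
  proof cases
    case 1
    thus ?thesis using Iu Iv dist convex_comb_ratio_same_cell[OF pos[OF j(1)] ratio[OF j(1)] _ c j(2,3) i(2,3)] L
      by (simp add: L_def h_def)
  next
    case 2
    have "1 - t + t' \<le> c" using dist 2 by simp
    thus ?thesis using Iu Iv L convex_comb_ratio_adjacent_cells[OF pos(2)[OF j(1)] ratio(2)[OF j(1)]
        ratio(2)[OF i(1), unfolded 2] _ c j(2,3) i(2,3)] 2
      by (simp add: L_def h_def)
  next
    case 3
    \<comment> \<open>case 2 read backwards: swap the ends of both cells, i.e. replace t, t' by 1 - t, 1 - t'\<close>
    have "1 - (1 - t) + (1 - t') \<le> c" using dist 3 by simp
    with convex_comb_ratio_adjacent_cells[OF pos(2)[OF i(1)] ratio(1)[OF j(1), unfolded 3]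
        ratio(1)[OF i(1)] _ c, of "1 - t" "1 - t'"] j(2,3) i(2,3) L 3
    have "t * f (Suc j) + (1 - t) * f j \<le> L * (1 + c) / 2 * (t' * f (Suc i) + (1 - t') * f i)"
      by (simp add: L_def h_def)
    thus ?thesis unfolding Iu Iv L_def h_def by (simp only: add.commute)
  qed
qed

lemma one_plus_ratio_same_sign:
  fixes x y h :: real
  assumes "h \<le> 2" "\<bar>x\<bar> \<le> h / 2" "\<bar>y\<bar> \<le> h / 2" "0 \<le> x * y"
  shows "(1 - h / 2) * (1 + x) \<le> 1 + y"
proof (cases "0 \<le> y")
  case True
  have "(1 - h / 2) * (1 + x) \<le> (1 - x) * (1 + x)" using assms by (intro mult_right_mono) auto
  also have "\<dots> \<le> 1" by (simp add: algebra_simps)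
  finally show ?thesis using True by simp
next
  case False
  hence "x \<le> 0" using assms(4) by (simp add: zero_le_mult_iff)
  hence "(1 - h / 2) * (1 + x) \<le> (1 - h / 2) * 1" using assms(1) by (intro mult_left_mono) auto
  thus ?thesis using abs_le_D2[OF assms(3)] by simp
qed

lemma perturbation_bound:
  fixes C' C Q h :: real
  assumes "\<bar>C'\<bar> \<le> C" "C * h / 4 \<le> 1" "0 \<le> h" "0 \<le> Q" "Q \<le> h\<^sup>2 / 4"
  shows "\<bar>C' * Q / 2\<bar> \<le> h / 2"
proof -
  have "\<bar>C' * Q / 2\<bar> = \<bar>C'\<bar> * Q / 2" using assms by (simp add: abs_mult)
  also have "\<dots> \<le> C * (h\<^sup>2 / 4) / 2" using assms by (intro divide_right_mono mult_mono) auto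
  also have "\<dots> = (C * h / 4) * (h / 2)" by (simp add: power2_eq_square)
  also have "\<dots> \<le> h / 2"
    using assms abs_ge_zero[of C'] by (intro mult_left_le_one_le) auto
  finally show ?thesis .
qed

text \<open>The summand (1 + h) / 2 in M_2 is there to pay for the factor 1 / (1 - h/2) lost to the
  perturbation 1 + C_j Q / 2.\<close>

lemma exp_le_one_minus_half:
  fixes h :: real
  assumes "0 \<le> h" "h \<le> 1"
  shows "exp (- ((1 + h) / 2) * h) \<le> 1 - h / 2"
proof -
  have "- ((1 + h) / 2) * h = - (h / 2) - 2 * (h / 2)\<^sup>2" by (simp add: power2_eq_square algebra_simps)
  also have "\<dots> \<le> ln (1 - h / 2)" using assms by (intro ln_one_minus_pos_lower_bound) auto
  finally have "exp (- ((1 + h) / 2) * h) \<le> exp (ln (1 - h / 2))" by (simp only: exp_le_cancel_iff)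
  also have "\<dots> = 1 - h / 2" using assms by simp
  finally show ?thesis .
qed

lemma summable_on_adjacent_propagation:
  fixes g :: "nat \<Rightarrow> 'a \<Rightarrow> real"
  assumes adj: "\<And>k k' j. k \<le> n \<Longrightarrow> k' \<le> n \<Longrightarrow> k' = Suc k \<or> k = Suc k' \<Longrightarrow> j \<in> I \<Longrightarrow>
      0 \<le> g k' j \<and> g k' j \<le> K * g k j"
    and k0: "k0 \<le> n" "g k0 summable_on I" and k: "k \<le> n"
  shows "g k summable_on I"
proof -
  have propagate: "g k' summable_on I" if "g k summable_on I" "k \<le> n" "k' \<le> n" "k' = Suc k \<or> k = Suc k'" for k k'
    using summable_on_cmult_right[OF that(1), of K]
    by (rule summable_on_comparison_test) (use adj[OF that(2-4)] in auto)
  show ?thesis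
  proof (cases "k0 \<le> k")
    case True
    thus ?thesis using k
    proof (induction k rule: dec_induct)
      case (step m)
      thus ?case using propagate[of m "Suc m"] by simp
    qed (simp add: k0)
  next
    case False
    hence "k \<le> k0" by simp
    thus ?thesis using k0
    proof (induction k rule: inc_induct)
      case (step m)
      thus ?case using propagate[of "Suc m" m] by simp
    qed simp
  qed
qed

locale transfer_operator_setting =
  fixes a b :: real and n :: nat and s c M0 C :: real and N :: enat
    and \<theta> :: "nat \<Rightarrow> real \<Rightarrow> real" and \<beta> :: "nat \<Rightarrow> nat \<Rightarrow> real" and Cc :: "nat \<Rightarrow> real"
  assumes ab: "a < b" and n: "1 \<le> n" and s: "0 \<le> s" and c: "c < 1"
    and \<theta>_maps: "\<And>j. j \<in> idx N \<Longrightarrow> \<theta> j ` {a..b} \<subseteq> {a..b}"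
    and \<theta>_lip: "\<And>j. j \<in> idx N \<Longrightarrow> c-lipschitz_on {a..b} (\<theta> j)"
    and \<beta>_K: "\<And>j. j \<in> idx N \<Longrightarrow> \<beta> j \<in> Kcone a b n M0"
    and \<beta>_pos: "\<And>j k. j \<in> idx N \<Longrightarrow> k \<le> n \<Longrightarrow> 0 < \<beta> j k"
    and Cc: "\<And>j. j \<in> idx N \<Longrightarrow> \<bar>Cc j\<bar> \<le> C"
    and step_le_1: "step a b n \<le> 1" and step_C: "C * step a b n / 4 \<le> 1"
    and betahat_summable:
      "N = \<infinity> \<Longrightarrow> \<exists>k0\<le>n. (\<lambda>j. betahat a b n s \<theta> Cc \<beta> j k0) summable_on idx N"
begin

abbreviation h :: real where "h \<equiv> step a b n"

abbreviation bhat :: "nat \<Rightarrow> nat \<Rightarrow> real" where "bhat \<equiv> betahat a b n s \<theta> Cc \<beta>"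

definition summand :: "(nat \<Rightarrow> real) \<Rightarrow> nat \<Rightarrow> nat \<Rightarrow> real" where
  "summand f k j = bhat j k * interp a b n f (\<theta> j (grid a b n k))"

lemma Lop_eq_infsum: "Lop a b n s N \<theta> Cc \<beta> f k = (\<Sum>\<^sub>\<infinity>j\<in>idx N. summand f k j)"
  by (simp add: Lop_def summand_def)

lemma h_pos: "0 < h"
  using ab n by (rule step_pos)

lemma \<theta>_grid: "j \<in> idx N \<Longrightarrow> k \<le> n \<Longrightarrow> \<theta> j (grid a b n k) \<in> {a..b}"
  using \<theta>_maps grid_mem_interval[OF ab n] by blast

lemma perturbation_bound_at:
  "j \<in> idx N \<Longrightarrow> u \<in> {a..b} \<Longrightarrow> \<bar>Cc j * Qfun a b n u / 2\<bar> \<le> h / 2"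
  using Cc step_C h_pos Qfun_bounds[OF ab n] by (intro perturbation_bound) auto

lemma perturbation_factor_lower:
  assumes "j \<in> idx N" "u \<in> {a..b}"
  shows "1 - h / 2 \<le> 1 + Cc j * Qfun a b n u / 2"
  using abs_le_D2[OF perturbation_bound_at[OF assms]] by simp

lemma perturbation_factor_ratio:
  assumes "j \<in> idx N" "u \<in> {a..b}" "v \<in> {a..b}"
  shows "(1 - h / 2) * (1 + Cc j * Qfun a b n u / 2) \<le> 1 + Cc j * Qfun a b n v / 2"
proof (rule one_plus_ratio_same_sign)
  have "0 \<le> (Cc j)\<^sup>2 * (Qfun a b n u * Qfun a b n v) / 4"
    using Qfun_bounds(1)[OF ab n assms(2)] Qfun_bounds(1)[OF ab n assms(3)] by simp
  thus "0 \<le> (Cc j * Qfun a b n u / 2) * (Cc j * Qfun a b n v / 2)"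
    by (simp add: power2_eq_square algebra_simps)
qed (use step_le_1 perturbation_bound_at assms in auto)

lemma betahat_pos:
  assumes "j \<in> idx N" "k \<le> n"
  shows "0 < bhat j k"
proof -
  have "0 < 1 - h / 2" using step_le_1 by simp
  also have "\<dots> \<le> 1 + Cc j * Qfun a b n (\<theta> j (grid a b n k)) / 2"
    using perturbation_factor_lower assms \<theta>_grid by blast
  finally show ?thesis using \<beta>_pos[OF assms] by (simp add: betahat_def)
qed

lemma betahat_adjacent:
  assumes j: "j \<in> idx N" and k: "k \<le> n" "k' \<le> n" "k' = Suc k \<or> k = Suc k'"
  shows "(1 - h / 2) * bhat j k' \<le> exp (s * M0 * h) * bhat j k"
proof -
  define q where "q i = 1 + Cc j * Qfun a b n (\<theta> j (grid a b n i)) / 2" for i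
  have "(1 - h / 2) * q k' \<le> q k"
    unfolding q_def using perturbation_factor_ratio j k \<theta>_grid by blast
  moreover have "\<beta> j k' powr s \<le> \<beta> j k powr s * exp (s * M0 * h)"
    using Kcone_adjacent[OF Kcone_powr[OF \<beta>_K[OF j] _ s] k] \<beta>_pos[OF j] by (simp add: less_imp_le)
  moreover have "0 \<le> (1 - h / 2) * q k'"
    using perturbation_factor_lower[OF j \<theta>_grid[OF j k(2)]] step_le_1 unfolding q_def
    by (intro mult_nonneg_nonneg) auto
  ultimately have "((1 - h / 2) * q k') * \<beta> j k' powr s \<le> q k * (\<beta> j k powr s * exp (s * M0 * h))"
    by (intro mult_mono) auto
  thus ?thesis by (simp add: betahat_def q_def algebra_simps)
qed

lemma growth_factor_bound:
  assumes "(1 + c) / 2 \<le> exp (- ((s * M0 + (1 + h) / 2) + \<delta>) * h)"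
  shows "exp (s * M0 * h) * ((1 + c) / 2) \<le> exp (- \<delta> * h) * (1 - h / 2)"
proof -
  have "(1 + c) / 2 \<le> exp (- (s * M0 * h)) * exp (- \<delta> * h) * exp (- ((1 + h) / 2) * h)"
    using assms by (simp add: exp_add[symmetric] algebra_simps)
  also have "\<dots> \<le> exp (- (s * M0 * h)) * exp (- \<delta> * h) * (1 - h / 2)"
    using exp_le_one_minus_half h_pos step_le_1 by (intro mult_left_mono) auto
  finally have "exp (s * M0 * h) * ((1 + c) / 2)
      \<le> exp (s * M0 * h) * (exp (- (s * M0 * h)) * exp (- \<delta> * h) * (1 - h / 2))"
    by (intro mult_left_mono) auto
  also have "\<dots> = exp (- \<delta> * h) * (1 - h / 2)"
    by (simp only: mult.assoc[symmetric] exp_minus_inverse mult_1)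
  finally show ?thesis .
qed

lemma interp_\<theta>_adjacent:
  assumes f: "f \<in> Kcone a b n M" "\<And>k. k \<le> n \<Longrightarrow> 0 < f k" and M: "2 \<le> exp (M * h)"
    and j: "j \<in> idx N" and k: "k \<le> n" "k' \<le> n" "k' = Suc k \<or> k = Suc k'"
  shows "interp a b n f (\<theta> j (grid a b n k'))
      \<le> exp (M * h) * (1 + c) / 2 * interp a b n f (\<theta> j (grid a b n k))"
proof -
  have "dist (\<theta> j (grid a b n k')) (\<theta> j (grid a b n k)) \<le> c * dist (grid a b n k') (grid a b n k)"
    using \<theta>_lip[OF j] grid_mem_interval[OF ab n] k by (intro lipschitz_onD) auto
  moreover have "dist (grid a b n k') (grid a b n k) = h"
    using k h_pos by (auto simp: dist_real_def grid_Suc)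
  ultimately show ?thesis
    using interp_ratio[OF ab n f M c \<theta>_grid[OF j k(2)] \<theta>_grid[OF j k(1)]] by (simp add: dist_real_def)
qed

lemma summand_pos:
  assumes "\<And>k. k \<le> n \<Longrightarrow> 0 < f k" "j \<in> idx N" "k \<le> n"
  shows "0 < summand f k j"
  using betahat_pos[OF assms(2,3)] interp_pos[OF ab n assms(1) \<theta>_grid[OF assms(2,3)]]
  by (simp add: summand_def)

lemma summand_adjacent:
  assumes f: "f \<in> Kcone a b n M" "\<And>k. k \<le> n \<Longrightarrow> 0 < f k" and M: "2 \<le> exp (M * h)"
    and M2: "(1 + c) / 2 \<le> exp (- ((s * M0 + (1 + h) / 2) + \<delta>) * h)"
    and j: "j \<in> idx N" and k: "k \<le> n" "k' \<le> n" "k' = Suc k \<or> k = Suc k'"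
  shows "summand f k' j \<le> exp ((M - \<delta>) * h) * summand f k j"
proof -
  define F where "F i = interp a b n f (\<theta> j (grid a b n i))" for i
  have F_pos: "0 < F i" if "i \<le> n" for i
    unfolding F_def using interp_pos[OF ab n f(2) \<theta>_grid[OF j that]] .
  have F_ratio: "F k' \<le> exp (M * h) * (1 + c) / 2 * F k"
    unfolding F_def using interp_\<theta>_adjacent[OF f(1) _ M j k] f(2) by blast
  have "(1 - h / 2) * summand f k' j = ((1 - h / 2) * bhat j k') * F k'"
    by (simp add: summand_def F_def)
  also have "\<dots> \<le> (exp (s * M0 * h) * bhat j k) * (exp (M * h) * (1 + c) / 2 * F k)"
    by (rule mult_mono[OF betahat_adjacent[OF j k] F_ratio])
      (use betahat_pos[OF j k(1)] F_pos[OF k(2)] in \<open>auto simp: less_imp_le\<close>)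
  also have "\<dots> = exp (M * h) * (exp (s * M0 * h) * ((1 + c) / 2)) * summand f k j"
    by (simp add: summand_def F_def)
  also have "\<dots> \<le> exp (M * h) * (exp (- \<delta> * h) * (1 - h / 2)) * summand f k j"
    using growth_factor_bound[OF M2] summand_pos[of f, OF f(2) j k(1)] by (intro mult_right_mono mult_left_mono) auto
  also have "\<dots> = (1 - h / 2) * (exp ((M - \<delta>) * h) * summand f k j)"
    by (simp add: exp_add[symmetric] algebra_simps)
  finally show ?thesis using step_le_1 by simp
qed

lemma summand_summable:
  assumes f: "\<And>k. k \<le> n \<Longrightarrow> 0 < f k"
    and k: "k \<le> n"
  shows "summand f k summable_on idx N"
proof (cases N)
  case (enat m)
  hence "finite (idx N)" by (auto simp: idx_def intro: finite_subset[of _ "{..m}"])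
  thus ?thesis by simp
next
  case infinity
  then obtain k0 where k0: "k0 \<le> n" "(\<lambda>j. bhat j k0) summable_on idx N"
    using betahat_summable by blast
  have "(\<lambda>j. bhat j k') summable_on idx N" if "k' \<le> n" for k'
  proof (rule summable_on_adjacent_propagation[where g = "\<lambda>k j. bhat j k", OF _ k0 that])
    fix k k' j assume "k \<le> n" "k' \<le> n" "k' = Suc k \<or> k = Suc k'" "j \<in> idx N"
    thus "0 \<le> bhat j k' \<and> bhat j k' \<le> exp (s * M0 * h) / (1 - h / 2) * bhat j k"
      using betahat_adjacent betahat_pos[of j k'] step_le_1 by (simp add: field_simps less_imp_le)
  qed
  hence "(\<lambda>j. bhat j k * (\<Sum>i\<le>n. f i)) summable_on idx N"
    using k by (intro summable_on_cmult_left)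
  thus ?thesis
  proof (rule summable_on_comparison_test)
    fix j assume j: "j \<in> idx N"
    show "summand f k j \<le> bhat j k * (\<Sum>i\<le>n. f i)"
      unfolding summand_def using betahat_pos[OF j k] f
      by (intro mult_left_mono interp_le_sum[OF ab n] \<theta>_grid[OF j k]) (auto simp: less_imp_le)
    show "0 \<le> summand f k j" using summand_pos[of f j k] f j k by (simp add: less_imp_le)
  qed
qed

lemma Lop_adjacent:
  assumes f: "f \<in> Kcone a b n M" "\<And>k. k \<le> n \<Longrightarrow> 0 < f k" and M: "2 \<le> exp (M * h)"
    and M2: "(1 + c) / 2 \<le> exp (- ((s * M0 + (1 + h) / 2) + \<delta>) * h)"
    and k: "k \<le> n" "k' \<le> n" "k' = Suc k \<or> k = Suc k'"
  shows "Lop a b n s N \<theta> Cc \<beta> f k' \<le> Lop a b n s N \<theta> Cc \<beta> f k * exp ((M - \<delta>) * h)"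
proof -
  have "(\<Sum>\<^sub>\<infinity>j\<in>idx N. summand f k' j) \<le> (\<Sum>\<^sub>\<infinity>j\<in>idx N. exp ((M - \<delta>) * h) * summand f k j)"
    using summand_summable[OF f(2)] summand_adjacent[OF f M M2 _ k] k
    by (intro infsum_mono summable_on_cmult_right) auto
  thus ?thesis by (simp add: Lop_eq_infsum infsum_cmult_right' mult.commute)
qed

lemma Lop_pos:
  assumes f: "\<And>k. k \<le> n \<Longrightarrow> 0 < f k"
    and N: "1 \<le> N" and k: "k \<le> n"
  shows "0 < Lop a b n s N \<theta> Cc \<beta> f k"
proof -
  have one: "1 \<in> idx N" using N by (simp add: idx_def one_enat_def)
  have "0 < (\<Sum>\<^sub>\<infinity>j\<in>{1}. summand f k j)" using summand_pos[OF f one k] by simp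
  also have "\<dots> \<le> (\<Sum>\<^sub>\<infinity>j\<in>idx N. summand f k j)"
    using summand_summable[OF f k] summand_pos[OF f _ k] one
    by (intro infsum_mono_neutral) (auto intro: less_imp_le)
  finally show ?thesis by (simp add: Lop_eq_infsum)
qed

end

theorem theorem8p3:
  fixes a b s \<delta> c M0 C M :: real and n :: nat and N :: enat
    and \<theta> :: "nat \<Rightarrow> real \<Rightarrow> real" and \<beta> :: "nat \<Rightarrow> nat \<Rightarrow> real" and Cc :: "nat \<Rightarrow> real"
  assumes ab: "a < b" and n2: "n \<ge> 2"
    and s: "s \<ge> 0" and \<delta>: "\<delta> > 0" and c: "0 < c" "c < 1" and M0: "M0 > 0" and C: "C \<ge> 0"
    and N: "N \<ge> 1"
    and \<theta>_maps: "\<And>j. j \<in> idx N \<Longrightarrow> \<theta> j ` {a..b} \<subseteq> {a..b}"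
    and \<theta>_lip: "\<And>j. j \<in> idx N \<Longrightarrow> c-lipschitz_on {a..b} (\<theta> j)"
    and \<beta>_K: "\<And>j. j \<in> idx N \<Longrightarrow> \<beta> j \<in> Kcone a b n M0 \<and> nonzero_grid n (\<beta> j)"
    and \<beta>_pos: "\<And>j k. j \<in> idx N \<Longrightarrow> k \<le> n \<Longrightarrow> \<beta> j k > 0"
    and Cj: "\<And>j. j \<in> idx N \<Longrightarrow> \<bar>Cc j\<bar> \<le> C"
    and summ: "N = \<infinity> \<Longrightarrow> \<exists>k0\<le>n. (\<lambda>j. betahat a b n s \<theta> Cc \<beta> j k0) summable_on idx N"
    and h1: "step a b n \<le> 1" and hC: "C * step a b n / 4 \<le> 1"
    and M2: "exp (- ((s * M0 + (1 + step a b n) / 2) + \<delta>) * step a b n) \<ge> (1 + c) / 2"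
    and M: "exp (M * step a b n) \<ge> 2"
  shows "\<forall>f. f \<in> Kcone a b n M \<and> nonzero_grid n f \<longrightarrow>
           Lop a b n s N \<theta> Cc \<beta> f \<in> Kcone a b n (M - \<delta>) \<and>
           nonzero_grid n (Lop a b n s N \<theta> Cc \<beta> f)"
proof (intro allI impI conjI)
  interpret transfer_operator_setting a b n s c M0 C N \<theta> \<beta> Cc
    using assms by unfold_locales auto
  fix f assume f: "f \<in> Kcone a b n M \<and> nonzero_grid n f"
  have "1 < exp (M * step a b n)" using M by linarith
  hence f_pos: "0 < f k" if "k \<le> n" for k
    using Kcone_pos[OF conjunct1[OF f] conjunct2[OF f] _ _ that] n2 by simp
  show "Lop a b n s N \<theta> Cc \<beta> f \<in> Kcone a b n (M - \<delta>)"
    unfolding Kcone_def using Lop_adjacent[of f M \<delta>] f f_pos M M2 by auto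
  show "nonzero_grid n (Lop a b n s N \<theta> Cc \<beta> f)"
    unfolding nonzero_grid_def using Lop_pos[of f 0] f_pos N by auto
qed

end
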